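(* Let $\Bbbk$ be a field, let $\mathrm{Var}$ be a variety of $\Bbbk$-algebras with one binary product defined by polylinear identities, and $\text{tri-}\mathrm{Var}$ the corresponding replicated variety of tri-algebras. Let $X$ be a set, $\dot X$ a disjoint copy of $X$, $F=\mathrm{Var}\langle X\cup\dot X\rangle$, $\varphi:F\to F$ the algebra homomorphism with $\varphi(x)=\varphi(\dot x)=x$, $F^{(3)}$ the space $F$ with operations $f\vdash g=\varphi(f)g$, $f\dashv g=f\varphi(g)$, $f\perp g=fg$, and $V$ the subalgebra of $F^{(3)}$ generated by $\dot X$ (so that $V\cong \text{tri-}\mathrm{Var}\langle X\rangle$ via $\dot x\leftrightarrow x$). Let $S\subseteq V$, and let $(S)^{(3)}$ denote the ideal of the tri-algebra $V$ generated by $S$ (the smallest subspace of $V$ containing $S$ and closed under $v* j$ and $j* v$ for $v\in V$, $j$ in it, $*\in\{\vdash,\dashv,\perp\}$). Then $$(S)^{(3)}=(S\cup\varphi(S))\cap V,$$ where $(P)$ denotes the (two-sided) ideal of the algebra $F$ generated by a subset $P\subseteq F$.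
   Context: Tri-algebras: linear spaces with three bilinear operations $\dashv$ (=$\mu_{\{1\}}$), $\vdash$ (=$\mu_{\{2\}}$), $\perp$ (=$\mu_{\{1,2\}}$). For a polylinear $\Phi(x_1,\dots,x_n)$ in the free algebra with one binary operation $\mu$ and nonempty $H\subseteq\{1,\dots,n\}$, $\Phi_H$ is obtained by viewing each monomial as a binary tree, marking leaves $x_i$, $i\in H$, and replacing $\mu$ at each node by $\mu_S$, $S\subseteq\{1,2\}$ the set of branches containing a marked leaf (by $\mu_{\{1\}}$ if $S=\varnothing$). $\text{tri-}\mathrm{Var}$ consists of tri-algebras satisfying $(a* b)\vdash c=(a\star b)\vdash c$, $a\dashv(b* c)=a\dashv(b\star c)$ for all $*,\star\in\{\vdash,\dashv,\perp\}$, and $\Phi_H=0$ for each defining identity $\Phi$ of $\mathrm{Var}$ and each nonempty $H$. *)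

theory Defs
  imports Main "HOL-Library.Poly_Mapping"
begin

text \<open>Nonassociative monomials = binary trees with leaves labelled by variables.\<close>
datatype 'v mon = Lf 'v | Nd "'v mon" "'v mon"

fun leaves :: "'v mon \<Rightarrow> 'v list" where
  "leaves (Lf v) = [v]"
| "leaves (Nd a b) = leaves a @ leaves b"

type_synonym ('v,'k) nfree = "'v mon \<Rightarrow>\<^sub>0 'k"

definition nsmult :: "'k::field \<Rightarrow> ('v,'k) nfree \<Rightarrow> ('v,'k) nfree" where
  "nsmult c p = Poly_Mapping.map (\<lambda>a. c * a) p"

definition nvar :: "'v \<Rightarrow> ('v,'k::field) nfree" where
  "nvar v = Poly_Mapping.single (Lf v) 1"

definition nmul :: "('v,'k::field) nfree \<Rightarrow> ('v,'k) nfree \<Rightarrow> ('v,'k) nfree" where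
  "nmul p q = (\<Sum>(m,n) \<in> Poly_Mapping.keys p \<times> Poly_Mapping.keys q.
                 Poly_Mapping.single (Nd m n) (Poly_Mapping.lookup p m * Poly_Mapping.lookup q n))"

fun evmon :: "('v \<Rightarrow> ('w,'k::field) nfree) \<Rightarrow> 'v mon \<Rightarrow> ('w,'k) nfree" where
  "evmon \<sigma> (Lf v) = \<sigma> v"
| "evmon \<sigma> (Nd a b) = nmul (evmon \<sigma> a) (evmon \<sigma> b)"

definition neval :: "('v \<Rightarrow> ('w,'k::field) nfree) \<Rightarrow> ('v,'k) nfree \<Rightarrow> ('w,'k) nfree" where
  "neval \<sigma> p = (\<Sum>m \<in> Poly_Mapping.keys p. nsmult (Poly_Mapping.lookup p m) (evmon \<sigma> m))"

definition polylinear :: "nat \<Rightarrow> (nat,'k::field) nfree \<Rightarrow> bool" where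
  "polylinear n \<Phi> \<longleftrightarrow> (\<forall>m \<in> Poly_Mapping.keys \<Phi>. distinct (leaves m) \<and> set (leaves m) = {0..<n})"

inductive_set nideal :: "('v,'k::field) nfree set \<Rightarrow> ('v,'k) nfree set"
  for P :: "('v,'k) nfree set" where
  gen: "p \<in> P \<Longrightarrow> p \<in> nideal P"
| zero: "0 \<in> nideal P"
| add: "a \<in> nideal P \<Longrightarrow> b \<in> nideal P \<Longrightarrow> a + b \<in> nideal P"
| smult: "a \<in> nideal P \<Longrightarrow> nsmult c a \<in> nideal P"
| mulL: "a \<in> nideal P \<Longrightarrow> nmul f a \<in> nideal P"
| mulR: "a \<in> nideal P \<Longrightarrow> nmul a f \<in> nideal P"

text \<open>The verbal (T-)ideal of k{Y} of the variety defined by the identities Ids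
  (pairs (n, \<Phi>) with \<Phi> polylinear in x_0..x_{n-1}): the ideal generated by all values
  \<Phi>(a_0,...,a_{n-1}), a_i \<in> k{Y}.\<close>
definition Tideal :: "(nat \<times> (nat,'k::field) nfree) set \<Rightarrow> ('v,'k) nfree set" where
  "Tideal Ids = nideal {neval \<sigma> \<Phi> | \<sigma> n \<Phi>. (n, \<Phi>) \<in> Ids}"

text \<open>Variables: Inl x is x \<in> X, Inr x is the dotted copy x' \<in> X' (disjoint copy).
  Elements of F are cosets modulo the T-ideal.\<close>
type_synonym ('x,'k) Fel = "('x + 'x, 'k) nfree set"

definition cls :: "(nat \<times> (nat,'k::field) nfree) set \<Rightarrow> ('x + 'x,'k) nfree \<Rightarrow> ('x,'k) Fel" where
  "cls Ids p = {q. q - p \<in> Tideal Ids}"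

definition Fcar :: "(nat \<times> (nat,'k::field) nfree) set \<Rightarrow> ('x,'k) Fel set" where
  "Fcar Ids = range (cls Ids)"

definition rep :: "('x,'k::field) Fel \<Rightarrow> ('x + 'x,'k) nfree" where
  "rep A = (SOME p. p \<in> A)"

definition Fzero :: "(nat \<times> (nat,'k::field) nfree) set \<Rightarrow> ('x,'k) Fel" where
  "Fzero Ids = cls Ids 0"
definition Fadd :: "(nat \<times> (nat,'k::field) nfree) set \<Rightarrow> ('x,'k) Fel \<Rightarrow> ('x,'k) Fel \<Rightarrow> ('x,'k) Fel" where
  "Fadd Ids A B = cls Ids (rep A + rep B)"
definition Fsmult :: "(nat \<times> (nat,'k::field) nfree) set \<Rightarrow> 'k \<Rightarrow> ('x,'k) Fel \<Rightarrow> ('x,'k) Fel" where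
  "Fsmult Ids c A = cls Ids (nsmult c (rep A))"
definition Fmul :: "(nat \<times> (nat,'k::field) nfree) set \<Rightarrow> ('x,'k) Fel \<Rightarrow> ('x,'k) Fel \<Rightarrow> ('x,'k) Fel" where
  "Fmul Ids A B = cls Ids (nmul (rep A) (rep B))"

text \<open>\<phi>: the homomorphism with \<phi>(x) = \<phi>(x') = x (well defined on F since the T-ideal is
  invariant under substitutions).\<close>
definition phi0 :: "('x + 'x,'k::field) nfree \<Rightarrow> ('x + 'x,'k) nfree" where
  "phi0 = neval (\<lambda>y. nvar (Inl (case_sum id id y)))"

definition Fphi :: "(nat \<times> (nat,'k::field) nfree) set \<Rightarrow> ('x,'k) Fel \<Rightarrow> ('x,'k) Fel" where
  "Fphi Ids A = cls Ids (phi0 (rep A))"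

definition Fvdash :: "(nat \<times> (nat,'k::field) nfree) set \<Rightarrow> ('x,'k) Fel \<Rightarrow> ('x,'k) Fel \<Rightarrow> ('x,'k) Fel" where
  "Fvdash Ids A B = Fmul Ids (Fphi Ids A) B"
definition Fdashv :: "(nat \<times> (nat,'k::field) nfree) set \<Rightarrow> ('x,'k) Fel \<Rightarrow> ('x,'k) Fel \<Rightarrow> ('x,'k) Fel" where
  "Fdashv Ids A B = Fmul Ids A (Fphi Ids B)"
definition Fperp :: "(nat \<times> (nat,'k::field) nfree) set \<Rightarrow> ('x,'k) Fel \<Rightarrow> ('x,'k) Fel \<Rightarrow> ('x,'k) Fel" where
  "Fperp Ids A B = Fmul Ids A B"

definition triops :: "(nat \<times> (nat,'k::field) nfree) set \<Rightarrow> (('x,'k) Fel \<Rightarrow> ('x,'k) Fel \<Rightarrow> ('x,'k) Fel) set" where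
  "triops Ids = {Fvdash Ids, Fdashv Ids, Fperp Ids}"

inductive_set Vsub :: "(nat \<times> (nat,'k::field) nfree) set \<Rightarrow> ('x,'k) Fel set"
  for Ids :: "(nat \<times> (nat,'k) nfree) set" where
  gen: "cls Ids (nvar (Inr x)) \<in> Vsub Ids"
| zero: "Fzero Ids \<in> Vsub Ids"
| add: "a \<in> Vsub Ids \<Longrightarrow> b \<in> Vsub Ids \<Longrightarrow> Fadd Ids a b \<in> Vsub Ids"
| smult: "a \<in> Vsub Ids \<Longrightarrow> Fsmult Ids c a \<in> Vsub Ids"
| op: "a \<in> Vsub Ids \<Longrightarrow> b \<in> Vsub Ids \<Longrightarrow> f \<in> triops Ids \<Longrightarrow> f a b \<in> Vsub Ids"

inductive_set triideal :: "(nat \<times> (nat,'k::field) nfree) set \<Rightarrow> ('x,'k) Fel set \<Rightarrow> ('x,'k) Fel set"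
  for Ids :: "(nat \<times> (nat,'k) nfree) set" and S :: "('x,'k) Fel set" where
  gen: "s \<in> S \<Longrightarrow> s \<in> triideal Ids S"
| zero: "Fzero Ids \<in> triideal Ids S"
| add: "a \<in> triideal Ids S \<Longrightarrow> b \<in> triideal Ids S \<Longrightarrow> Fadd Ids a b \<in> triideal Ids S"
| smult: "a \<in> triideal Ids S \<Longrightarrow> Fsmult Ids c a \<in> triideal Ids S"
| opL: "v \<in> Vsub Ids \<Longrightarrow> j \<in> triideal Ids S \<Longrightarrow> f \<in> triops Ids \<Longrightarrow> f v j \<in> triideal Ids S"
| opR: "v \<in> Vsub Ids \<Longrightarrow> j \<in> triideal Ids S \<Longrightarrow> f \<in> triops Ids \<Longrightarrow> f j v \<in> triideal Ids S"

inductive_set Fideal :: "(nat \<times> (nat,'k::field) nfree) set \<Rightarrow> ('x,'k) Fel set \<Rightarrow> ('x,'k) Fel set"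
  for Ids :: "(nat \<times> (nat,'k) nfree) set" and P :: "('x,'k) Fel set" where
  gen: "p \<in> P \<Longrightarrow> p \<in> Fideal Ids P"
| zero: "Fzero Ids \<in> Fideal Ids P"
| add: "a \<in> Fideal Ids P \<Longrightarrow> b \<in> Fideal Ids P \<Longrightarrow> Fadd Ids a b \<in> Fideal Ids P"
| smult: "a \<in> Fideal Ids P \<Longrightarrow> Fsmult Ids c a \<in> Fideal Ids P"
| mulL: "u \<in> Fcar Ids \<Longrightarrow> j \<in> Fideal Ids P \<Longrightarrow> Fmul Ids u j \<in> Fideal Ids P"
| mulR: "u \<in> Fcar Ids \<Longrightarrow> j \<in> Fideal Ids P \<Longrightarrow> Fmul Ids j u \<in> Fideal Ids P"

end

theory Submission
  imports Defs
begin

text \<open>Let \<pi> and \<psi> be the endomorphisms of F with \<pi>(x) = x, \<pi>(x') = 0 and \<psi>(x) = x', \<psi>(x') = 0,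
  so that \<phi>\<psi> = \<pi> and \<pi>\<phi> = \<phi>. The subalgebra V is exactly the kernel of \<pi>, and every f \<in> F
  splits as f = (f - \<pi> f) + \<phi>(\<psi> f) with f - \<pi> f and \<psi> f in V. Multiplying by this splitting
  shows that every element of the ideal (S \<union> \<phi>(S)) of F has the form a + \<phi>(b) with
  a, b \<in> (S)^(3). If such an element lies in V, applying \<pi> kills a and fixes \<phi>(b), so \<phi>(b) = 0
  and the element is a. Conversely (S)^(3) and its image under \<phi> lie in (S \<union> \<phi>(S)), because
  every tri-algebra product is an ordinary product of elements and their images under \<phi>.\<close>

section \<open>The free nonassociative algebra\<close>

lemma lookup_nsmult [simp]: "Poly_Mapping.lookup (nsmult c p) m = c * Poly_Mapping.lookup p m"
  by (simp add: nsmult_def Poly_Mapping.map.rep_eq when_def)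

lemma nsmult_add_right: "nsmult c (p + q) = nsmult c p + nsmult c q"
  by (rule poly_mapping_eqI) (simp add: lookup_add algebra_simps)

lemma nsmult_diff_right: "nsmult c (p - q) = nsmult c p - nsmult c q"
  by (rule poly_mapping_eqI) (simp add: lookup_minus algebra_simps)

lemma nsmult_add_left: "nsmult (c + d) p = nsmult c p + nsmult d p"
  by (rule poly_mapping_eqI) (simp add: lookup_add algebra_simps)

lemma nsmult_zero_right [simp]: "nsmult c 0 = 0"
  by (rule poly_mapping_eqI) simp

lemma nsmult_zero_left [simp]: "nsmult 0 p = 0"
  and nsmult_one [simp]: "nsmult 1 p = p"
  and nsmult_nsmult [simp]: "nsmult c (nsmult d p) = nsmult (c * d) p"
  by (rule poly_mapping_eqI; simp)+

lemma nsmult_minus_one: "nsmult (-1) p = - p"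
  by (rule poly_mapping_eqI) simp

lemma nsmult_sum: "nsmult c (\<Sum>i\<in>A. f i) = (\<Sum>i\<in>A. nsmult c (f i))"
  by (induction A rule: infinite_finite_induct) (auto simp: nsmult_add_right)

lemma nsmult_single: "nsmult c (Poly_Mapping.single m d) = Poly_Mapping.single m (c * d)"
  by (rule poly_mapping_eqI) (simp add: lookup_single when_def)

lemma poly_mapping_sum_single:
  "p = (\<Sum>m\<in>Poly_Mapping.keys p. Poly_Mapping.single m (Poly_Mapping.lookup p m))"
  by (rule poly_mapping_eqI) (simp add: lookup_sum lookup_single when_def sum.delta in_keys_iff)

lemma lookup_nmul:
  "Poly_Mapping.lookup (nmul p q) t =
     (case t of Lf _ \<Rightarrow> 0 | Nd m n \<Rightarrow> Poly_Mapping.lookup p m * Poly_Mapping.lookup q n)"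
proof -
  have "Poly_Mapping.lookup (nmul p q) t =
      (\<Sum>x\<in>Poly_Mapping.keys p \<times> Poly_Mapping.keys q.
         if (\<exists>a b. t = Nd a b) \<and> x = (case t of Nd a b \<Rightarrow> (a, b))
         then Poly_Mapping.lookup p (fst x) * Poly_Mapping.lookup q (snd x) else 0)"
    unfolding nmul_def lookup_sum
    by (rule sum.cong) (auto simp: lookup_single when_def split: mon.split if_splits)
  also have "\<dots> = (case t of Lf _ \<Rightarrow> 0 | Nd m n \<Rightarrow> Poly_Mapping.lookup p m * Poly_Mapping.lookup q n)"
    by (cases t) (auto simp: sum.delta' in_keys_iff)
  finally show ?thesis .
qed

lemma nmul_add_left: "nmul (p + p') q = nmul p q + nmul p' q"
  and nmul_add_right: "nmul q (p + p') = nmul q p + nmul q p'"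
  and nmul_diff_left: "nmul (p - p') q = nmul p q - nmul p' q"
  and nmul_diff_right: "nmul q (p - p') = nmul q p - nmul q p'"
  and nmul_nsmult_left: "nmul (nsmult c p) q = nsmult c (nmul p q)"
  and nmul_nsmult_right: "nmul q (nsmult c p) = nsmult c (nmul q p)"
  by (rule poly_mapping_eqI;
      simp add: lookup_nmul lookup_add lookup_minus algebra_simps split: mon.split)+

lemma nmul_zero_left [simp]: "nmul 0 q = 0"
  and nmul_zero_right [simp]: "nmul q 0 = 0"
  by (rule poly_mapping_eqI; simp add: lookup_nmul split: mon.split)+

lemma nmul_sum_left: "nmul (\<Sum>i\<in>A. f i) q = (\<Sum>i\<in>A. nmul (f i) q)"
  by (induction A rule: infinite_finite_induct) (auto simp: nmul_add_left)

lemma nmul_sum_right: "nmul q (\<Sum>i\<in>A. f i) = (\<Sum>i\<in>A. nmul q (f i))"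
  by (induction A rule: infinite_finite_induct) (auto simp: nmul_add_right)

lemma nmul_single:
  "nmul (Poly_Mapping.single a c) (Poly_Mapping.single b d) = Poly_Mapping.single (Nd a b) (c * d)"
  by (rule poly_mapping_eqI) (auto simp: lookup_nmul lookup_single when_def split: mon.split)

lemma neval_superset:
  assumes "finite A" "Poly_Mapping.keys p \<subseteq> A"
  shows "neval \<sigma> p = (\<Sum>m\<in>A. nsmult (Poly_Mapping.lookup p m) (evmon \<sigma> m))"
  unfolding neval_def using assms by (intro sum.mono_neutral_left) (auto simp: in_keys_iff)

lemma neval_zero [simp]: "neval \<sigma> 0 = 0"
  by (simp add: neval_def)

lemma neval_add: "neval \<sigma> (p + q) = neval \<sigma> p + neval \<sigma> q"
  using keys_add[of p q]
  by (simp add: neval_superset[of "Poly_Mapping.keys p \<union> Poly_Mapping.keys q"]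
      lookup_add nsmult_add_left sum.distrib)

lemma neval_nsmult: "neval \<sigma> (nsmult c p) = nsmult c (neval \<sigma> p)"
proof -
  have "Poly_Mapping.keys (nsmult c p) \<subseteq> Poly_Mapping.keys p"
    by (auto simp: in_keys_iff)
  then have "neval \<sigma> (nsmult c p) =
      (\<Sum>m\<in>Poly_Mapping.keys p. nsmult (Poly_Mapping.lookup (nsmult c p) m) (evmon \<sigma> m))"
    by (rule neval_superset[OF finite_keys])
  then show ?thesis
    by (simp add: nsmult_sum neval_def)
qed

lemma neval_diff: "neval \<sigma> (p - q) = neval \<sigma> p - neval \<sigma> q"
  by (metis diff_conv_add_uminus neval_add neval_nsmult nsmult_minus_one)

lemma neval_sum: "neval \<sigma> (\<Sum>i\<in>A. f i) = (\<Sum>i\<in>A. neval \<sigma> (f i))"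
  by (induction A rule: infinite_finite_induct) (auto simp: neval_add)

lemma neval_single: "neval \<sigma> (Poly_Mapping.single m c) = nsmult c (evmon \<sigma> m)"
  by (subst neval_superset[of "{m}"]) auto

lemma neval_nvar [simp]: "neval \<sigma> (nvar v) = \<sigma> v"
  by (simp add: nvar_def neval_single)

lemma neval_nmul: "neval \<sigma> (nmul p q) = nmul (neval \<sigma> p) (neval \<sigma> q)"
proof -
  let ?lp = "Poly_Mapping.lookup p" and ?lq = "Poly_Mapping.lookup q"
  have "nmul p q = (\<Sum>m\<in>Poly_Mapping.keys p. \<Sum>n\<in>Poly_Mapping.keys q.
                      Poly_Mapping.single (Nd m n) (?lp m * ?lq n))"
    by (subst poly_mapping_sum_single[of p], subst poly_mapping_sum_single[of q])
      (simp add: nmul_sum_left nmul_sum_right nmul_single sum.swap[of _ "Poly_Mapping.keys q"])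
  then have "neval \<sigma> (nmul p q) = (\<Sum>m\<in>Poly_Mapping.keys p. \<Sum>n\<in>Poly_Mapping.keys q.
                 nsmult (?lp m * ?lq n) (nmul (evmon \<sigma> m) (evmon \<sigma> n)))"
    by (simp add: neval_sum neval_single)
  also have "\<dots> = nmul (neval \<sigma> p) (neval \<sigma> q)"
    by (simp add: neval_def nmul_sum_left nmul_sum_right nmul_nsmult_left nmul_nsmult_right
        nsmult_sum mult.commute sum.swap[of _ "Poly_Mapping.keys q"])
  finally show ?thesis .
qed

lemma neval_evmon: "neval \<tau> (evmon \<sigma> m) = evmon (neval \<tau> \<circ> \<sigma>) m"
  by (induction m) (auto simp: neval_nmul)

lemma neval_neval: "neval \<tau> (neval \<sigma> p) = neval (neval \<tau> \<circ> \<sigma>) p"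
  by (simp add: neval_def[of \<sigma>] neval_sum neval_nsmult neval_evmon)
    (simp add: neval_def)

section \<open>The verbal ideal and the quotient F\<close>

lemma Tideal_zero: "0 \<in> Tideal Ids"
  and Tideal_add: "a \<in> Tideal Ids \<Longrightarrow> b \<in> Tideal Ids \<Longrightarrow> a + b \<in> Tideal Ids"
  and Tideal_nsmult: "a \<in> Tideal Ids \<Longrightarrow> nsmult c a \<in> Tideal Ids"
  and Tideal_nmul_left: "a \<in> Tideal Ids \<Longrightarrow> nmul f a \<in> Tideal Ids"
  and Tideal_nmul_right: "a \<in> Tideal Ids \<Longrightarrow> nmul a f \<in> Tideal Ids"
  unfolding Tideal_def by (fact nideal.intros)+

lemma Tideal_diff: "a \<in> Tideal Ids \<Longrightarrow> b \<in> Tideal Ids \<Longrightarrow> a - b \<in> Tideal Ids"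
  by (metis Tideal_add Tideal_nsmult diff_conv_add_uminus nsmult_minus_one)

lemma Tideal_neval: "p \<in> Tideal Ids \<Longrightarrow> neval \<tau> p \<in> Tideal Ids"
  unfolding Tideal_def
proof (induction rule: nideal.induct)
  case (gen p)
  then obtain \<sigma> n \<Phi> where "p = neval \<sigma> \<Phi>" "(n, \<Phi>) \<in> Ids" by blast
  then show ?case by (auto simp: neval_neval intro: nideal.gen)
qed (simp_all add: neval_add neval_nsmult neval_nmul nideal.intros)

lemma cls_eq_iff: "cls Ids p = cls Ids q \<longleftrightarrow> p - q \<in> Tideal Ids"
proof
  assume "cls Ids p = cls Ids q"
  moreover have "p \<in> cls Ids p" by (simp add: cls_def Tideal_zero)
  ultimately show "p - q \<in> Tideal Ids" by (simp add: cls_def)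
next
  assume "p - q \<in> Tideal Ids"
  moreover have "r - q = (r - p) + (p - q)" "r - p = (r - q) - (p - q)" for r by simp_all
  ultimately show "cls Ids p = cls Ids q"
    unfolding cls_def by (metis Tideal_add Tideal_diff)
qed

lemma cls_in_Fcar [simp]: "cls Ids p \<in> Fcar Ids"
  by (simp add: Fcar_def)

lemma FcarE: "A \<in> Fcar Ids \<Longrightarrow> (\<And>p. A = cls Ids p \<Longrightarrow> P) \<Longrightarrow> P"
  by (auto simp: Fcar_def)

lemma rep_cls: "rep (cls Ids p) - p \<in> Tideal Ids"
proof -
  have "p \<in> cls Ids p" by (simp add: cls_def Tideal_zero)
  then have "rep (cls Ids p) \<in> cls Ids p" unfolding rep_def by (rule someI)
  then show ?thesis by (simp add: cls_def)
qed

lemma Fadd_cls [simp]: "Fadd Ids (cls Ids p) (cls Ids q) = cls Ids (p + q)"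
proof -
  have "(rep (cls Ids p) + rep (cls Ids q)) - (p + q) =
        (rep (cls Ids p) - p) + (rep (cls Ids q) - q)"
    by simp
  then show ?thesis unfolding Fadd_def cls_eq_iff by (metis Tideal_add rep_cls)
qed

lemma Fsmult_cls [simp]: "Fsmult Ids c (cls Ids p) = cls Ids (nsmult c p)"
  unfolding Fsmult_def cls_eq_iff by (metis Tideal_nsmult rep_cls nsmult_diff_right)

lemma Fmul_cls [simp]: "Fmul Ids (cls Ids p) (cls Ids q) = cls Ids (nmul p q)"
proof -
  let ?p = "rep (cls Ids p)" and ?q = "rep (cls Ids q)"
  have "nmul ?p ?q - nmul p q = nmul (?p - p) ?q + nmul p (?q - q)"
    by (simp add: nmul_diff_left nmul_diff_right)
  then show ?thesis
    unfolding Fmul_def cls_eq_iff by (metis Tideal_add Tideal_nmul_left Tideal_nmul_right rep_cls)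
qed

lemma cls_neval_cong: "cls Ids p = cls Ids q \<Longrightarrow> cls Ids (neval \<sigma> p) = cls Ids (neval \<sigma> q)"
  by (simp add: cls_eq_iff flip: neval_diff) (rule Tideal_neval)

lemma Fphi_cls [simp]: "Fphi Ids (cls Ids p) = cls Ids (phi0 p)"
  unfolding Fphi_def phi0_def
  by (rule cls_neval_cong) (simp add: cls_eq_iff rep_cls)

lemma Ftriops_cls [simp]:
  "Fvdash Ids (cls Ids p) (cls Ids q) = cls Ids (nmul (phi0 p) q)"
  "Fdashv Ids (cls Ids p) (cls Ids q) = cls Ids (nmul p (phi0 q))"
  "Fperp Ids (cls Ids p) (cls Ids q) = cls Ids (nmul p q)"
  by (simp_all add: Fvdash_def Fdashv_def Fperp_def)

lemma triops_iff: "f \<in> triops Ids \<longleftrightarrow> f = Fvdash Ids \<or> f = Fdashv Ids \<or> f = Fperp Ids"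
  by (simp add: triops_def)

section \<open>The endomorphisms \<phi>, \<pi> and \<psi>\<close>

definition pi0 :: "('x + 'x, 'k::field) nfree \<Rightarrow> ('x + 'x, 'k) nfree" where
  "pi0 = neval (case_sum (\<lambda>x. nvar (Inl x)) (\<lambda>_. 0))"

definition psi0 :: "('x + 'x, 'k::field) nfree \<Rightarrow> ('x + 'x, 'k) nfree" where
  "psi0 = neval (case_sum (\<lambda>x. nvar (Inr x)) (\<lambda>_. 0))"

lemma phi0_zero [simp]: "phi0 0 = 0"
  and phi0_add: "phi0 (p + q) = phi0 p + phi0 q"
  and phi0_nsmult: "phi0 (nsmult c p) = nsmult c (phi0 p)"
  and phi0_nmul: "phi0 (nmul p q) = nmul (phi0 p) (phi0 q)"
  by (simp_all add: phi0_def neval_add neval_nsmult neval_nmul)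

lemma pi0_zero [simp]: "pi0 0 = 0"
  and pi0_add: "pi0 (p + q) = pi0 p + pi0 q"
  and pi0_nsmult: "pi0 (nsmult c p) = nsmult c (pi0 p)"
  and pi0_nmul: "pi0 (nmul p q) = nmul (pi0 p) (pi0 q)"
  and pi0_sum: "pi0 (\<Sum>i\<in>A. f i) = (\<Sum>i\<in>A. pi0 (f i))"
  by (simp_all add: pi0_def neval_add neval_nsmult neval_nmul neval_sum)

lemma phi0_phi0 [simp]: "phi0 (phi0 p) = phi0 p"
  and pi0_phi0 [simp]: "pi0 (phi0 p) = phi0 p"
  and phi0_psi0 [simp]: "phi0 (psi0 p) = pi0 p"
  unfolding phi0_def pi0_def psi0_def neval_neval
  by (rule arg_cong[where f = "\<lambda>\<sigma>. neval \<sigma> p"]; simp add: fun_eq_iff split: sum.split)+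

lemma Fphi_Fzero [simp]: "Fphi Ids (Fzero Ids) = Fzero Ids"
  by (simp add: Fzero_def)

section \<open>V is the kernel of \<pi>\<close>

lemma Vsub_add: "cls Ids p \<in> Vsub Ids \<Longrightarrow> cls Ids q \<in> Vsub Ids \<Longrightarrow> cls Ids (p + q) \<in> Vsub Ids"
  and Vsub_nsmult: "cls Ids p \<in> Vsub Ids \<Longrightarrow> cls Ids (nsmult c p) \<in> Vsub Ids"
  and Vsub_vdash: "cls Ids p \<in> Vsub Ids \<Longrightarrow> cls Ids q \<in> Vsub Ids \<Longrightarrow> cls Ids (nmul (phi0 p) q) \<in> Vsub Ids"
  and Vsub_dashv: "cls Ids p \<in> Vsub Ids \<Longrightarrow> cls Ids q \<in> Vsub Ids \<Longrightarrow> cls Ids (nmul p (phi0 q)) \<in> Vsub Ids"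
  and Vsub_perp: "cls Ids p \<in> Vsub Ids \<Longrightarrow> cls Ids q \<in> Vsub Ids \<Longrightarrow> cls Ids (nmul p q) \<in> Vsub Ids"
  by (metis Fadd_cls Fsmult_cls Ftriops_cls triops_iff Vsub.intros)+

lemma Vsub_zero: "cls Ids 0 \<in> Vsub Ids"
  by (metis Fzero_def Vsub.zero)

lemma Vsub_sum: "(\<And>i. i \<in> A \<Longrightarrow> cls Ids (f i) \<in> Vsub Ids) \<Longrightarrow> cls Ids (\<Sum>i\<in>A. f i) \<in> Vsub Ids"
  by (induction A rule: infinite_finite_induct) (auto simp: Vsub_add Vsub_zero)

lemma Vsub_psi0: "cls Ids (psi0 p) \<in> Vsub Ids"
proof -
  have "cls Ids (evmon (case_sum (\<lambda>x. nvar (Inr x)) (\<lambda>_. 0)) m) \<in> Vsub Ids" for m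
    by (induction m) (auto simp: Vsub_zero Vsub_perp Vsub.gen split: sum.split)
  then show ?thesis
    unfolding psi0_def neval_def by (intro Vsub_sum Vsub_nsmult)
qed

lemma Vsub_single_diff_pi0:
  "cls Ids (Poly_Mapping.single m 1 - pi0 (Poly_Mapping.single m 1)) \<in> Vsub Ids"
proof (induction m)
  case (Lf v)
  then show ?case
    by (cases v) (auto simp: pi0_def nvar_def[symmetric] Vsub_zero Vsub.gen)
next
  case (Nd m n)
  let ?m = "Poly_Mapping.single m (1::'b)" and ?n = "Poly_Mapping.single n (1::'b)"
  have "nmul ?m ?n - pi0 (nmul ?m ?n) =
        nmul (?m - pi0 ?m) (?n - pi0 ?n) + nmul (?m - pi0 ?m) (phi0 (psi0 ?n))
        + nmul (phi0 (psi0 ?m)) (?n - pi0 ?n)"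
    by (simp add: pi0_nmul nmul_diff_left nmul_diff_right algebra_simps)
  also have "cls Ids \<dots> \<in> Vsub Ids"
    using Nd.IH by (intro Vsub_add Vsub_perp Vsub_dashv Vsub_vdash Vsub_psi0)
  finally show ?case
    by (simp add: nmul_single)
qed

lemma Vsub_diff_pi0: "cls Ids (p - pi0 p) \<in> Vsub Ids"
proof -
  let ?e = "\<lambda>m. Poly_Mapping.single m 1"
  have p: "p = (\<Sum>m\<in>Poly_Mapping.keys p. nsmult (Poly_Mapping.lookup p m) (?e m))"
    by (subst poly_mapping_sum_single) (simp add: nsmult_single)
  have "p - pi0 p =
      (\<Sum>m\<in>Poly_Mapping.keys p. nsmult (Poly_Mapping.lookup p m) (?e m - pi0 (?e m)))"
    by (subst (1 2) p) (simp add: pi0_sum pi0_nsmult nsmult_diff_right sum_subtractf)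
  also have "cls Ids \<dots> \<in> Vsub Ids"
    by (intro Vsub_sum Vsub_nsmult Vsub_single_diff_pi0)
  finally show ?thesis .
qed

lemma Vsub_in_kernel_pi0: "A \<in> Vsub Ids \<Longrightarrow> \<exists>p. A = cls Ids p \<and> pi0 p \<in> Tideal Ids"
proof (induction rule: Vsub.induct)
  case (gen x)
  then show ?case by (auto simp: pi0_def Tideal_zero)
next
  case zero
  then show ?case by (auto simp: Fzero_def Tideal_zero)
next
  case (add a b)
  then show ?case by (auto simp: pi0_add Tideal_add)
next
  case (smult a c)
  then show ?case by (auto simp: pi0_nsmult Tideal_nsmult)
next
  case (op a b f)
  then obtain p q where "a = cls Ids p" "b = cls Ids q" "pi0 p \<in> Tideal Ids" "pi0 q \<in> Tideal Ids"
    by blast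
  with op.hyps(3) show ?case
    unfolding triops_iff
    by (elim disjE) (force simp: pi0_nmul intro: Tideal_nmul_left Tideal_nmul_right)+
qed

lemma cls_in_Vsub_iff: "cls Ids p \<in> Vsub Ids \<longleftrightarrow> pi0 p \<in> Tideal Ids"
proof
  assume "cls Ids p \<in> Vsub Ids"
  then obtain q where "cls Ids p = cls Ids q" "pi0 q \<in> Tideal Ids"
    using Vsub_in_kernel_pi0 by blast
  then have "pi0 p - pi0 q \<in> Tideal Ids"
    unfolding cls_eq_iff pi0_def by (metis Tideal_neval neval_diff)
  then show "pi0 p \<in> Tideal Ids"
    using \<open>pi0 q \<in> Tideal Ids\<close> Tideal_add by fastforce
next
  assume "pi0 p \<in> Tideal Ids"
  then have "cls Ids p = cls Ids (p - pi0 p)" by (simp add: cls_eq_iff)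
  then show "cls Ids p \<in> Vsub Ids" using Vsub_diff_pi0 by simp
qed

lemma Vsub_subset_Fcar: "Vsub Ids \<subseteq> Fcar Ids"
  using Vsub_in_kernel_pi0 by fastforce

lemma triideal_subset_Vsub: "S \<subseteq> Vsub Ids \<Longrightarrow> triideal Ids S \<subseteq> Vsub Ids"
proof
  show "j \<in> Vsub Ids" if "S \<subseteq> Vsub Ids" "j \<in> triideal Ids S" for j
    using that(2) by induction (use that(1) in \<open>auto intro: Vsub.intros\<close>)
qed

lemma triideal_add: "cls Ids p \<in> triideal Ids S \<Longrightarrow> cls Ids q \<in> triideal Ids S \<Longrightarrow> cls Ids (p + q) \<in> triideal Ids S"
  and triideal_nsmult: "cls Ids p \<in> triideal Ids S \<Longrightarrow> cls Ids (nsmult c p) \<in> triideal Ids S"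
  and triideal_zero: "cls Ids 0 \<in> triideal Ids S"
  by (metis Fadd_cls Fsmult_cls Fzero_def triideal.intros)+

lemma triideal_mul_left:
  assumes "cls Ids p \<in> Vsub Ids" "cls Ids q \<in> triideal Ids S"
  shows "cls Ids (nmul (phi0 p) q) \<in> triideal Ids S"
    and "cls Ids (nmul p (phi0 q)) \<in> triideal Ids S"
    and "cls Ids (nmul p q) \<in> triideal Ids S"
  using triideal.opL[OF assms, of "Fvdash Ids"] triideal.opL[OF assms, of "Fdashv Ids"]
    triideal.opL[OF assms, of "Fperp Ids"]
  by (simp_all add: triops_iff)

lemma triideal_mul_right:
  assumes "cls Ids p \<in> Vsub Ids" "cls Ids q \<in> triideal Ids S"
  shows "cls Ids (nmul (phi0 q) p) \<in> triideal Ids S"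
    and "cls Ids (nmul q (phi0 p)) \<in> triideal Ids S"
    and "cls Ids (nmul q p) \<in> triideal Ids S"
  using triideal.opR[OF assms, of "Fvdash Ids"] triideal.opR[OF assms, of "Fdashv Ids"]
    triideal.opR[OF assms, of "Fperp Ids"]
  by (simp_all add: triops_iff)

lemma Fideal_add: "cls Ids p \<in> Fideal Ids P \<Longrightarrow> cls Ids q \<in> Fideal Ids P \<Longrightarrow> cls Ids (p + q) \<in> Fideal Ids P"
  and Fideal_nsmult: "cls Ids p \<in> Fideal Ids P \<Longrightarrow> cls Ids (nsmult c p) \<in> Fideal Ids P"
  and Fideal_nmul_left: "cls Ids q \<in> Fideal Ids P \<Longrightarrow> cls Ids (nmul p q) \<in> Fideal Ids P"
  and Fideal_nmul_right: "cls Ids q \<in> Fideal Ids P \<Longrightarrow> cls Ids (nmul q p) \<in> Fideal Ids P"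
  by (metis Fadd_cls Fsmult_cls Fmul_cls cls_in_Fcar Fideal.intros)+

lemma triideal_subset_Fideal:
  assumes "S \<subseteq> Vsub Ids" and "j \<in> triideal Ids S"
  shows "j \<in> Fideal Ids (S \<union> Fphi Ids ` S) \<and> Fphi Ids j \<in> Fideal Ids (S \<union> Fphi Ids ` S)"
  using assms(2)
proof induction
  have cls: "\<exists>p. a = cls Ids p" if "a \<in> Vsub Ids" for a
    using that Vsub_subset_Fcar by (blast elim: FcarE)
  note in_Vsub = subsetD[OF triideal_subset_Vsub[OF assms(1)]]
  {
    case (gen s)
    then show ?case by (auto intro: Fideal.gen)
  next
    case zero
    then show ?case by (simp add: Fideal.zero)
  next
    case (add a b)
    then obtain p q where "a = cls Ids p" "b = cls Ids q" using cls in_Vsub by metis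
    with add.IH show ?case by (simp add: phi0_add Fideal_add)
  next
    case (smult a c)
    then obtain p where "a = cls Ids p" using cls in_Vsub by metis
    with smult.IH show ?case by (simp add: phi0_nsmult Fideal_nsmult)
  next
    case (opL v j f)
    then obtain p q where "v = cls Ids p" "j = cls Ids q" using cls in_Vsub by metis
    with opL.IH opL.hyps(3) show ?case
      by (auto simp: triops_iff phi0_nmul intro: Fideal_nmul_left)
  next
    case (opR v j f)
    then obtain p q where "v = cls Ids p" "j = cls Ids q" using cls in_Vsub by metis
    with opR.IH opR.hyps(3) show ?case
      by (auto simp: triops_iff phi0_nmul intro: Fideal_nmul_right)
  }
qed


lemma Fideal_decompose:
  assumes "S \<subseteq> Vsub Ids" and "j \<in> Fideal Ids (S \<union> Fphi Ids ` S)"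
  shows "\<exists>a b. cls Ids a \<in> triideal Ids S \<and> cls Ids b \<in> triideal Ids S \<and> j = cls Ids (a + phi0 b)"
  using assms(2)
proof induction
  case (gen s)
  then obtain t p where "t \<in> S" "t = cls Ids p" "s = t \<or> s = Fphi Ids t"
    using assms(1) Vsub_subset_Fcar by (blast elim: FcarE)
  then show ?case
    by (metis Fphi_cls add.right_neutral add_0 phi0_zero triideal.gen triideal_zero)
next
  case zero
  then show ?case by (metis Fzero_def add_0 phi0_zero triideal_zero)
next
  case (add j j')
  then obtain a b a' b' where "cls Ids a \<in> triideal Ids S" "cls Ids b \<in> triideal Ids S"
    "cls Ids a' \<in> triideal Ids S" "cls Ids b' \<in> triideal Ids S"
    "j = cls Ids (a + phi0 b)" "j' = cls Ids (a' + phi0 b')" by blast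
  then show ?case
    by (intro exI[of _ "a + a'"] exI[of _ "b + b'"]) (simp add: triideal_add phi0_add algebra_simps)
next
  case (smult j c)
  then obtain a b where "cls Ids a \<in> triideal Ids S" "cls Ids b \<in> triideal Ids S"
    "j = cls Ids (a + phi0 b)" by blast
  then show ?case
    by (intro exI[of _ "nsmult c a"] exI[of _ "nsmult c b"])
      (simp add: triideal_nsmult phi0_nsmult nsmult_add_right)
next
  case (mulL u j)
  then obtain a b where ab: "cls Ids a \<in> triideal Ids S" "cls Ids b \<in> triideal Ids S"
    and j: "j = cls Ids (a + phi0 b)" by blast
  obtain p where u: "u = cls Ids p" using mulL.hyps(1) by (rule FcarE)
  \<comment> \<open>split p = (p - \<pi> p) + \<phi>(\<psi> p) with both p - \<pi> p and \<psi> p in V\<close>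
  have "nmul p (a + phi0 b) =
      (nmul (phi0 (psi0 p)) a + nmul (p - pi0 p) a + nmul (p - pi0 p) (phi0 b))
      + phi0 (nmul (psi0 p) b)"
    by (simp add: phi0_nmul nmul_add_left nmul_add_right nmul_diff_left nmul_diff_right algebra_simps)
  moreover have "cls Ids (nmul (phi0 (psi0 p)) a + nmul (p - pi0 p) a + nmul (p - pi0 p) (phi0 b))
      \<in> triideal Ids S"
    using ab by (intro triideal_add triideal_mul_left Vsub_psi0 Vsub_diff_pi0)
  moreover have "cls Ids (nmul (psi0 p) b) \<in> triideal Ids S"
    using ab by (intro triideal_mul_left Vsub_psi0)
  ultimately show ?case using u j by auto
next
  case (mulR u j)
  then obtain a b where ab: "cls Ids a \<in> triideal Ids S" "cls Ids b \<in> triideal Ids S"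
    and j: "j = cls Ids (a + phi0 b)" by blast
  obtain p where u: "u = cls Ids p" using mulR.hyps(1) by (rule FcarE)
  have "nmul (a + phi0 b) p =
      (nmul a (phi0 (psi0 p)) + nmul a (p - pi0 p) + nmul (phi0 b) (p - pi0 p))
      + phi0 (nmul b (psi0 p))"
    by (simp add: phi0_nmul nmul_add_left nmul_add_right nmul_diff_left nmul_diff_right algebra_simps)
  moreover have "cls Ids (nmul a (phi0 (psi0 p)) + nmul a (p - pi0 p) + nmul (phi0 b) (p - pi0 p))
      \<in> triideal Ids S"
    using ab by (intro triideal_add triideal_mul_right Vsub_psi0 Vsub_diff_pi0)
  moreover have "cls Ids (nmul b (psi0 p)) \<in> triideal Ids S"
    using ab by (intro triideal_mul_right Vsub_psi0)
  ultimately show ?case using u j by auto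
qed

theorem theorem4p1:
  fixes Ids :: "(nat \<times> (nat,'k::field) nfree) set"
    and S :: "('x,'k) Fel set"
  assumes "\<forall>(n, \<Phi>) \<in> Ids. polylinear n \<Phi>"
    and "S \<subseteq> Vsub Ids"
  shows "triideal Ids S = Fideal Ids (S \<union> Fphi Ids ` S) \<inter> Vsub Ids"
proof
  show "triideal Ids S \<subseteq> Fideal Ids (S \<union> Fphi Ids ` S) \<inter> Vsub Ids"
    using triideal_subset_Fideal[OF assms(2)] triideal_subset_Vsub[OF assms(2)] by blast
next
  show "Fideal Ids (S \<union> Fphi Ids ` S) \<inter> Vsub Ids \<subseteq> triideal Ids S"
  proof
    fix j assume j: "j \<in> Fideal Ids (S \<union> Fphi Ids ` S) \<inter> Vsub Ids"
    then obtain a b where a: "cls Ids a \<in> triideal Ids S"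
      and "cls Ids b \<in> triideal Ids S" and ab: "j = cls Ids (a + phi0 b)"
      using Fideal_decompose[OF assms(2)] by blast
    have "pi0 a \<in> Tideal Ids"
      using a triideal_subset_Vsub[OF assms(2)] by (auto simp: cls_in_Vsub_iff)
    moreover have "pi0 a + phi0 b \<in> Tideal Ids"
      using j ab by (simp add: cls_in_Vsub_iff pi0_add)
    ultimately have "phi0 b \<in> Tideal Ids"
      by (metis Tideal_diff add_diff_cancel_left')
    then have "j = cls Ids a"
      using ab by (simp add: cls_eq_iff)
    with a show "j \<in> triideal Ids S" by simp
  qed
qed

end
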